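(* In the setting of the context, assume that $\widetilde F,\widetilde G\in\mathbb C(s)$, and define $\widetilde f=\tfrac12(\widetilde F+\widetilde F^{\iota_1})$, $\widetilde g=\tfrac12(\widetilde G+\widetilde G^{\iota_2})$, $\widetilde f_h=\tfrac12(\widetilde F-\widetilde F^{\iota_1})$, $\widetilde g_h=\tfrac12(\widetilde G-\widetilde G^{\iota_2})$. Then: (1) the pair $(h_1,h_2)=(\widetilde f,\widetilde g)$ satisfies $\widetilde\gamma_1h_1+\widetilde\gamma_2h_2+\omega=0$ with $h_1^{\iota_1}=h_1$ and $h_2^{\iota_2}=h_2$; (2) the pair $(h_1,h_2)=(\widetilde f_h,\widetilde g_h)$ satisfies $\widetilde\gamma_1h_1+\widetilde\gamma_2h_2=0$ with $h_1^{\iota_1}=-h_1$ and $h_2^{\iota_2}=-h_2$.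
   Context: Let $\mathcal S$ be one of $\mathcal S_1=\{(1,-1),(-1,1),(0,1)\}$, $\mathcal S_2=\{(1,-1),(-1,1),(1,0),(0,1)\}$, $\mathcal S_3=\{(1,-1),(-1,1),(1,1)\}$, $\mathcal S_4=\{(1,-1),(-1,1),(0,1),(1,1)\}$, $\mathcal S_5=\{(1,-1),(-1,1),(1,0),(0,1),(1,1)\}$ with weights $d_{i,j}>0$ on $\mathcal S$ and Boltzmann weights $a,b>0$; $\mathbb F=\mathbb Q((d_{i,j}),a,b)$, $A=1-1/a$, $B=1-1/b$, $\omega=1-A-B$. $Q(x,y)$ is the generating function of weighted quadrant walks with interacting boundaries on $\mathcal S$ (weight $\prod_vd_v^{n_v}a^{n_x}b^{n_y}$, $n_x,n_y$ the numbers of visits after time $0$ to the $x$- and $y$-axis, monomial $x^iy^jt^n$ for endpoint $(i,j)$ and length $n$). Fix a real $t>0$ transcendental over $\mathbb F$, small enough that $Q$ converges for $|x|,|y|<1$. Let $\phi:s\mapsto(x(s),y(s))$ be a fixed rational parametrization by $\mathbb P^1$ of the closure in $\mathbb P^1\times\mathbb P^1$ of $\{xy(1-t\sum_{(i,j)\in\mathcal S}d_{i,j}x^iy^j)=0\}$, with $x(0)=y(0)=x(\infty)=y(\infty)=0$, $x(1/s)=x(s)$, $y(q/s)=y(s)$ for a fixed real $q$ not a root of unity. Let $\iota_1(s)=1/s$, $\iota_2(s)=q/s$ and $h^\tau=h\circ\tau$. Let $\widetilde\gamma_1=A/x(s)-td_{1,-1}/y(s)$, $\widetilde\gamma_2=B/y(s)-td_{-1,1}/x(s)$,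 $\widetilde\gamma=\widetilde\gamma_1/\widetilde\gamma_2$. $\widetilde F$, $\widetilde G$ are the meromorphic continuations to $\mathbb C$ of $x(s)Q(x(s),0)$ and $y(s)Q(0,y(s))$; they satisfy $\widetilde\gamma_1\widetilde F+\widetilde\gamma_2\widetilde G+\omega=0$ and $\widetilde F(s/q)=\frac{\widetilde\gamma}{\widetilde\gamma^{\iota_2}}(s)\widetilde F(s)+\big(\frac{\omega}{\widetilde\gamma_2(s)}-\frac{\omega}{\widetilde\gamma_2^{\iota_2}(s)}\big)\frac{1}{\widetilde\gamma^{\iota_2}(s)}$. *)

theory Defs
  imports "HOL-Analysis.Analysis" "HOL-Computational_Algebra.Polynomial"
begin

definition stepset :: "nat \<Rightarrow> (int \<times> int) set" where
  "stepset k =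
    (if k = 1 then {(1,-1),(-1,1),(0,1)}
     else if k = 2 then {(1,-1),(-1,1),(1,0),(0,1)}
     else if k = 3 then {(1,-1),(-1,1),(1,1)}
     else if k = 4 then {(1,-1),(-1,1),(0,1),(1,1)}
     else {(1,-1),(-1,1),(1,0),(0,1),(1,1)})"

fun wcount :: "(int \<times> int) set \<Rightarrow> (int \<times> int \<Rightarrow> real) \<Rightarrow> real \<Rightarrow> real
                 \<Rightarrow> nat \<Rightarrow> int \<Rightarrow> int \<Rightarrow> real" where
  "wcount S d a b 0 i j = (if i = 0 \<and> j = 0 then 1 else 0)"
| "wcount S d a b (Suc n) i j =
     (if i \<ge> 0 \<and> j \<ge> 0 then
        (if j = 0 then a else 1) * (if i = 0 then b else 1) *
        (\<Sum>v\<in>S. d v * wcount S d a b n (i - fst v) (j - snd v))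
      else 0)"

definition Qgf :: "(int \<times> int) set \<Rightarrow> (int \<times> int \<Rightarrow> real) \<Rightarrow> real \<Rightarrow> real \<Rightarrow> real
                   \<Rightarrow> complex \<Rightarrow> complex \<Rightarrow> complex" where
  "Qgf S d a b t x y =
     (\<Sum>\<^sub>\<infinity>(n,i,j)\<in>UNIV. complex_of_real (wcount S d a b n (int i) (int j) * t ^ n)
                          * x ^ i * y ^ j)"

definition Qx0 :: "(int \<times> int) set \<Rightarrow> (int \<times> int \<Rightarrow> real) \<Rightarrow> real \<Rightarrow> real \<Rightarrow> real
                   \<Rightarrow> complex \<Rightarrow> complex" where
  "Qx0 S d a b t x = Qgf S d a b t x 0"

definition Q0y :: "(int \<times> int) set \<Rightarrow> (int \<times> int \<Rightarrow> real) \<Rightarrow> real \<Rightarrow> real \<Rightarrow> real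
                   \<Rightarrow> complex \<Rightarrow> complex" where
  "Q0y S d a b t y = Qgf S d a b t 0 y"

inductive_set gen_field :: "real set \<Rightarrow> real set" for X :: "real set" where
  gen_rat: "r \<in> \<rat> \<Longrightarrow> r \<in> gen_field X"
| gen_base: "r \<in> X \<Longrightarrow> r \<in> gen_field X"
| gen_add: "r \<in> gen_field X \<Longrightarrow> u \<in> gen_field X \<Longrightarrow> r + u \<in> gen_field X"
| gen_mult: "r \<in> gen_field X \<Longrightarrow> u \<in> gen_field X \<Longrightarrow> r * u \<in> gen_field X"
| gen_uminus: "r \<in> gen_field X \<Longrightarrow> - r \<in> gen_field X"
| gen_inverse: "r \<in> gen_field X \<Longrightarrow> inverse r \<in> gen_field X"

definition transcendental_over :: "real set \<Rightarrow> real \<Rightarrow> bool" where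
  "transcendental_over K t \<longleftrightarrow>
     (\<forall>p :: real poly. p \<noteq> 0 \<and> (\<forall>i. coeff p i \<in> K) \<longrightarrow> poly p t \<noteq> 0)"

text \<open>Rational functions are represented by complex functions p/q (q a nonzero
  polynomial); at the finitely many zeros of q the value is a junk value, so
  identities between rational functions are stated for all but finitely many s
  (filter cofinite).\<close>

definition is_ratfun :: "(complex \<Rightarrow> complex) \<Rightarrow> bool" where
  "is_ratfun f \<longleftrightarrow> (\<exists>p r :: complex poly. r \<noteq> 0 \<and> (\<forall>s. f s = poly p s / poly r s))"

text \<open>The polynomial xy(1 - t S(x,y)) = xy - t \<Sum> d_{i,j} x^{i+1} y^{j+1}.\<close>

definition kernel_poly :: "(int \<times> int) set \<Rightarrow> (int \<times> int \<Rightarrow> real) \<Rightarrow> real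
                          \<Rightarrow> complex \<Rightarrow> complex \<Rightarrow> complex" where
  "kernel_poly S d t X Y =
     X * Y - complex_of_real t *
       (\<Sum>v\<in>S. complex_of_real (d v) * X ^ nat (fst v + 1) * Y ^ nat (snd v + 1))"

end

theory Submission
  imports Defs
begin

(* The q-difference equation taken at q/s expresses F(1/s) through F(q/s); substituting it into
   the functional equation at q/s gives
     gamma1(s) F(1/s) + gamma2(s) G(q/s) + omega = 0,
   and half the sum and half the difference of this and the functional equation at s are the two
   claims, while the symmetries hold because s -> 1/s and s -> q/s are involutions.  The
   substitution divides by gamma1 and gamma2, so the real content is that neither vanishes
   identically.  If, say, A y = t d_{1,-1} x on the curve, the branch of the kernel curve through
   the origin lies on the line y = c x with c = t d_{1,-1}/A; dividing the kernel by x^2 and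
   letting s -> 0 forces c = t d_{1,-1} + t d_{-1,1} c^2, i.e. A - A^2 = d_{1,-1} d_{-1,1} t^2,
   an algebraic relation for t over F. *)

lemma eventually_cofinite_imp_at:
  fixes z :: "'a :: t1_space"
  assumes "eventually P cofinite"
  shows "eventually P (at z within A)"
  using assms by (intro eventually_cosparse_imp_eventually_at[OF _ UNIV_I])
    (simp add: eventually_cosparse eventually_cofinite finite_imp_sparse)

lemma eventually_cofinite_divide:
  fixes q :: "'a :: field"
  assumes "q \<noteq> 0" "eventually P cofinite"
  shows "eventually (\<lambda>s. P (q / s)) cofinite"
proof -
  have "bij (\<lambda>s. q / s)"
    by (rule involuntory_imp_bij) (use assms(1) in simp)
  then have "finite ((\<lambda>s. q / s) -` {u. \<not> P u})"
    using assms(2) by (intro finite_vimageI) (simp_all add: eventually_cofinite bij_is_inj)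
  then show ?thesis by (simp add: eventually_cofinite vimage_def)
qed

lemma cofinite_contradiction:
  fixes P :: "'a::semiring_char_0 \<Rightarrow> bool"
  assumes "\<forall>\<^sub>F s in cofinite. P s" "\<forall>\<^sub>F s in cofinite. \<not> P s"
  shows False
  using eventually_conj[OF assms] by (simp add: eventually_False infinite_UNIV_char_0)

lemma eventually_poly_nonzero: "p \<noteq> 0 \<Longrightarrow> \<forall>\<^sub>F s in cofinite. poly p s \<noteq> (0 :: 'a :: idom)"
  by (simp add: eventually_cofinite poly_roots_finite)

lemma is_ratfun_zero_or_eventually_nonzero:
  assumes "is_ratfun h"
  shows "h = (\<lambda>_. 0) \<or> (\<forall>\<^sub>F s in cofinite. h s \<noteq> 0)"
proof -
  obtain p r where "r \<noteq> 0" and h: "\<And>s. h s = poly p s / poly r s"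
    using assms unfolding is_ratfun_def by blast
  show ?thesis
  proof (cases "p = 0")
    case False
    with \<open>r \<noteq> 0\<close> have "\<forall>\<^sub>F s in cofinite. poly p s \<noteq> 0 \<and> poly r s \<noteq> 0"
      by (intro eventually_conj eventually_poly_nonzero)
    then show ?thesis by (auto simp: h elim: eventually_mono)
  qed (simp add: h fun_eq_iff)
qed

lemma is_ratfun_lincomb_eventually:
  assumes "is_ratfun x" "is_ratfun y"
  obtains h where "is_ratfun h" "\<forall>\<^sub>F s in cofinite. \<alpha> * x s + \<beta> * y s = h s"
proof -
  obtain px rx where "rx \<noteq> 0" and x: "\<And>s. x s = poly px s / poly rx s"
    using assms(1) unfolding is_ratfun_def by blast
  obtain py ry where "ry \<noteq> 0" and y: "\<And>s. y s = poly py s / poly ry s"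
    using assms(2) unfolding is_ratfun_def by blast
  define N where "N = smult \<alpha> (px * ry) + smult \<beta> (py * rx)"
  define h where "h s = poly N s / poly (rx * ry) s" for s
  have "is_ratfun h"
    unfolding is_ratfun_def h_def using \<open>rx \<noteq> 0\<close> \<open>ry \<noteq> 0\<close> by (intro exI[of _ N] exI[of _ "rx * ry"]) simp
  moreover have "\<forall>\<^sub>F s in cofinite. poly rx s \<noteq> 0 \<and> poly ry s \<noteq> 0"
    using \<open>rx \<noteq> 0\<close> \<open>ry \<noteq> 0\<close> by (intro eventually_conj eventually_poly_nonzero)
  then have "\<forall>\<^sub>F s in cofinite. \<alpha> * x s + \<beta> * y s = h s"
    by eventually_elim (simp add: x y h_def N_def field_simps)
  ultimately show ?thesis by (rule that)
qed

lemma is_ratfun_lincomb_dichotomy: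
  assumes "is_ratfun x" "is_ratfun y"
  shows "(\<forall>\<^sub>F s in cofinite. \<alpha> * x s + \<beta> * y s = 0) \<or> (\<forall>\<^sub>F s in cofinite. \<alpha> * x s + \<beta> * y s \<noteq> 0)"
proof -
  obtain h where h: "is_ratfun h" "\<forall>\<^sub>F s in cofinite. \<alpha> * x s + \<beta> * y s = h s"
    using is_ratfun_lincomb_eventually[OF assms] .
  from is_ratfun_zero_or_eventually_nonzero[OF h(1)] show ?thesis
  proof
    assume "h = (\<lambda>_. 0)"
    then show ?thesis using h(2) by simp
  next
    assume "\<forall>\<^sub>F s in cofinite. h s \<noteq> 0"
    with h(2) have "\<forall>\<^sub>F s in cofinite. \<alpha> * x s + \<beta> * y s \<noteq> 0"
      by eventually_elim simp
    then show ?thesis ..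
  qed
qed

(* X Y (1 - T S(X,Y)) for the step polynomial S = alpha X/Y + beta Y/X + gamma Y + delta X + epsilon X Y,
   i.e. with weights alpha, beta, gamma, delta, epsilon on the steps (1,-1), (-1,1), (0,1), (1,0), (1,1). *)
definition kernel_form :: "'a::comm_ring_1 \<Rightarrow> 'a \<Rightarrow> 'a \<Rightarrow> 'a \<Rightarrow> 'a \<Rightarrow> 'a \<Rightarrow> 'a \<Rightarrow> 'a \<Rightarrow> 'a" where
  "kernel_form T \<alpha> \<beta> \<gamma> \<delta> \<epsilon> X Y =
     X * Y - T * (\<alpha> * X\<^sup>2 + \<beta> * Y\<^sup>2 + \<gamma> * X * Y\<^sup>2 + \<delta> * X\<^sup>2 * Y + \<epsilon> * X\<^sup>2 * Y\<^sup>2)"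

lemma kernel_form_swap: "kernel_form T \<alpha> \<beta> \<gamma> \<delta> \<epsilon> X Y = kernel_form T \<beta> \<alpha> \<delta> \<gamma> \<epsilon> Y X"
  by (simp add: kernel_form_def algebra_simps)

lemma kernel_form_zero_left: "kernel_form T \<alpha> \<beta> \<gamma> \<delta> \<epsilon> 0 Y = - (T * \<beta> * Y\<^sup>2)"
  by (simp add: kernel_form_def)

lemma kernel_poly_stepset:
  assumes "k \<in> {1..5}"
  shows "kernel_poly (stepset k) d t X Y =
    kernel_form (of_real t) (of_real (d (1,-1))) (of_real (d (-1,1)))
      (if (0,1) \<in> stepset k then of_real (d (0,1)) else 0)
      (if (1,0) \<in> stepset k then of_real (d (1,0)) else 0)
      (if (1,1) \<in> stepset k then of_real (d (1,1)) else 0) X Y"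
proof -
  have "k = 1 \<or> k = 2 \<or> k = 3 \<or> k = 4 \<or> k = 5" using assms by auto
  then show ?thesis
    by (elim disjE) (simp_all add: kernel_poly_def kernel_form_def stepset_def algebra_simps power2_eq_square)
qed

lemma kernel_form_slope_at_origin:
  fixes u v :: "'b \<Rightarrow> 'a::real_normed_field"
  assumes "(u \<longlongrightarrow> 0) F" "F \<noteq> bot"
    and "\<forall>\<^sub>F s in F. u s \<noteq> 0 \<and> v s = c * u s \<and> kernel_form T \<alpha> \<beta> \<gamma> \<delta> \<epsilon> (u s) (v s) = 0"
  shows "c = T * \<alpha> + T * \<beta> * c\<^sup>2"
proof -
  have "\<forall>\<^sub>F s in F. T * (\<gamma> * c\<^sup>2 * u s + \<delta> * c * u s + \<epsilon> * c\<^sup>2 * (u s)\<^sup>2) = c - T * \<alpha> - T * \<beta> * c\<^sup>2"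
    using assms(3)
  proof eventually_elim
    case (elim s)
    then have "kernel_form T \<alpha> \<beta> \<gamma> \<delta> \<epsilon> (u s) (c * u s) = 0" by metis
    moreover have "kernel_form T \<alpha> \<beta> \<gamma> \<delta> \<epsilon> (u s) (c * u s) = (u s)\<^sup>2 *
        (c - T * \<alpha> - T * \<beta> * c\<^sup>2 - T * (\<gamma> * c\<^sup>2 * u s + \<delta> * c * u s + \<epsilon> * c\<^sup>2 * (u s)\<^sup>2))"
      unfolding kernel_form_def power2_eq_square by algebra
    ultimately have "c - T * \<alpha> - T * \<beta> * c\<^sup>2 - T * (\<gamma> * c\<^sup>2 * u s + \<delta> * c * u s + \<epsilon> * c\<^sup>2 * (u s)\<^sup>2) = 0"
      using elim by simp
    then show ?case by (metis eq_iff_diff_eq_0)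
  qed
  moreover have "((\<lambda>s. T * (\<gamma> * c\<^sup>2 * u s + \<delta> * c * u s + \<epsilon> * c\<^sup>2 * (u s)\<^sup>2)) \<longlongrightarrow> 0) F"
    by (auto intro!: tendsto_eq_intros assms(1))
  ultimately have "((\<lambda>s. c - T * \<alpha> - T * \<beta> * c\<^sup>2) \<longlongrightarrow> 0) F"
    by (rule Lim_transform_eventually[rotated])
  then have "c - T * \<alpha> - T * \<beta> * c\<^sup>2 = 0"
    using assms(2) by (simp add: tendsto_const_iff)
  then show ?thesis by (simp add: diff_diff_eq)
qed

lemma gen_field_zero: "0 \<in> gen_field X"
  by (rule gen_rat) simp

lemma gen_field_one: "1 \<in> gen_field X"
  by (rule gen_rat) simp

lemma gen_field_diff: "r \<in> gen_field X \<Longrightarrow> u \<in> gen_field X \<Longrightarrow> r - u \<in> gen_field X"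
  by (metis diff_conv_add_uminus gen_add gen_uminus)

lemma gen_field_divide: "r \<in> gen_field X \<Longrightarrow> u \<in> gen_field X \<Longrightarrow> r / u \<in> gen_field X"
  by (metis divide_inverse gen_inverse gen_mult)

lemma transcendental_over_gen_field_quadratic:
  assumes "transcendental_over (gen_field X) t" "u \<in> gen_field X" "v \<in> gen_field X" "v \<noteq> 0"
  shows "u + v * t\<^sup>2 \<noteq> 0"
proof -
  let ?p = "[:u:] + monom v 2"
  have "coeff ?p 2 \<noteq> 0" using assms(4) by (simp add: coeff_eq_0)
  then have "?p \<noteq> 0" by (metis coeff_0)
  moreover have "\<forall>i. coeff ?p i \<in> gen_field X"
    using assms(2,3) by (simp add: coeff_pCons' gen_field_zero gen_add split: nat.split)
  ultimately have "poly ?p t \<noteq> 0"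
    using assms(1) unfolding transcendental_over_def by blast
  then show ?thesis by (simp add: poly_monom)
qed

lemma transcendental_not_kernel_slope:
  fixes t P \<alpha> \<beta> :: real
  assumes "transcendental_over (gen_field X) t"
    and "P \<in> gen_field X" "\<alpha> \<in> gen_field X" "\<beta> \<in> gen_field X"
    and "t \<noteq> 0" "P \<noteq> 0" "\<alpha> \<noteq> 0" "\<beta> \<noteq> 0"
  shows "t * \<alpha> / P \<noteq> t * \<alpha> + t * \<beta> * (t * \<alpha> / P)\<^sup>2"
proof
  assume "t * \<alpha> / P = t * \<alpha> + t * \<beta> * (t * \<alpha> / P)\<^sup>2"
  then have "t * \<alpha> * P = t * \<alpha> * (P\<^sup>2 + \<alpha> * \<beta> * t\<^sup>2)"
    using assms(6) by (simp add: field_simps power2_eq_square)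
  then have "(P - P\<^sup>2) + (- (\<alpha> * \<beta>)) * t\<^sup>2 = 0"
    using assms(5,7) by simp
  moreover have "(P - P\<^sup>2) + (- (\<alpha> * \<beta>)) * t\<^sup>2 \<noteq> 0"
    using assms(2-4,7,8)
    by (intro transcendental_over_gen_field_quadratic[OF assms(1)])
      (auto simp: power2_eq_square intro: gen_field_diff gen_mult gen_uminus)
  ultimately show False by contradiction
qed

lemma kernel_param_eventually_nonzero:
  assumes "is_ratfun x" "is_ratfun y" "x \<noteq> (\<lambda>_. 0) \<or> y \<noteq> (\<lambda>_. 0)" "T * \<beta> \<noteq> 0"
    and "\<forall>\<^sub>F s in cofinite. kernel_form T \<alpha> \<beta> \<gamma> \<delta> \<epsilon> (x s) (y s) = 0"
  shows "\<forall>\<^sub>F s in cofinite. x s \<noteq> 0"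
proof -
  have False if x0: "x = (\<lambda>_. 0)"
  proof -
    have y0: "\<forall>\<^sub>F s in cofinite. y s = 0"
      using assms(5) by eventually_elim (use x0 assms(4) in \<open>simp add: kernel_form_zero_left\<close>)
    have "\<not> (\<forall>\<^sub>F s in cofinite. y s \<noteq> 0)"
    proof
      assume "\<forall>\<^sub>F s in cofinite. y s \<noteq> 0"
      with y0 show False by (rule cofinite_contradiction)
    qed
    then have "y = (\<lambda>_. 0)" using is_ratfun_zero_or_eventually_nonzero[OF assms(2)] by blast
    with x0 assms(3) show False by simp
  qed
  then show ?thesis using is_ratfun_zero_or_eventually_nonzero[OF assms(1)] by blast
qed

lemma kernel_param_off_line:
  fixes t P \<alpha> \<beta> :: real
  assumes x_rat: "is_ratfun x" and y_rat: "is_ratfun y"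
    and x_0: "(x \<longlongrightarrow> 0) (at 0)" and x_nz: "\<forall>\<^sub>F s in cofinite. x s \<noteq> 0"
    and kernel: "\<forall>\<^sub>F s in cofinite. kernel_form (of_real t) (of_real \<alpha>) (of_real \<beta>) \<gamma> \<delta> \<epsilon> (x s) (y s) = 0"
    and transc: "transcendental_over (gen_field X) t"
    and coeffs: "P \<in> gen_field X" "\<alpha> \<in> gen_field X" "\<beta> \<in> gen_field X"
    and nonzero: "t \<noteq> 0" "\<alpha> \<noteq> 0" "\<beta> \<noteq> 0"
  shows "\<forall>\<^sub>F s in cofinite. of_real P * y s - of_real (t * \<alpha>) * x s \<noteq> 0"
proof -
  have False if line: "\<forall>\<^sub>F s in cofinite. of_real P * y s - of_real (t * \<alpha>) * x s = 0"
  proof (cases "P = 0")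
    case True
    have "\<forall>\<^sub>F s in cofinite. x s = 0"
      using line by eventually_elim (use True nonzero(1,2) in simp)
    with x_nz show False by (rule cofinite_contradiction[rotated])
  next
    case False
    define c where "c = t * \<alpha> / P"
    have "\<forall>\<^sub>F s in cofinite. x s \<noteq> 0 \<and> y s = of_real c * x s \<and>
        kernel_form (of_real t) (of_real \<alpha>) (of_real \<beta>) \<gamma> \<delta> \<epsilon> (x s) (y s) = 0"
      using x_nz line kernel by eventually_elim (use False in \<open>simp add: c_def field_simps\<close>)
    then have "of_real c = of_real t * of_real \<alpha> + of_real t * of_real \<beta> * (of_real c :: complex)\<^sup>2"
      by (intro kernel_form_slope_at_origin[OF x_0] eventually_cofinite_imp_at) simp_all
    then have "c = t * \<alpha> + t * \<beta> * c\<^sup>2"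
      by (metis of_real_add of_real_eq_iff of_real_mult of_real_power)
    then show False
      using transcendental_not_kernel_slope[OF transc coeffs nonzero(1) False nonzero(2,3)] by (simp add: c_def)
  qed
  then show ?thesis
    using is_ratfun_lincomb_dichotomy[OF x_rat y_rat, of "- of_real (t * \<alpha>)" "of_real P"] by auto
qed

lemma kernel_param_nondegenerate:
  fixes t P Q \<alpha> \<beta> :: real
  assumes x_rat: "is_ratfun x" and y_rat: "is_ratfun y"
    and x_0: "(x \<longlongrightarrow> 0) (at 0)" and y_0: "(y \<longlongrightarrow> 0) (at 0)"
    and nonconstant: "x \<noteq> (\<lambda>_. 0) \<or> y \<noteq> (\<lambda>_. 0)"
    and kernel: "\<forall>\<^sub>F s in cofinite. kernel_form (of_real t) (of_real \<alpha>) (of_real \<beta>) \<gamma> \<delta> \<epsilon> (x s) (y s) = 0"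
    and transc: "transcendental_over (gen_field X) t"
    and coeffs: "P \<in> gen_field X" "Q \<in> gen_field X" "\<alpha> \<in> gen_field X" "\<beta> \<in> gen_field X"
    and nonzero: "t \<noteq> 0" "\<alpha> \<noteq> 0" "\<beta> \<noteq> 0"
  shows "\<forall>\<^sub>F s in cofinite. x s \<noteq> 0" and "\<forall>\<^sub>F s in cofinite. y s \<noteq> 0"
    and "\<forall>\<^sub>F s in cofinite. of_real P / x s - of_real (t * \<alpha>) / y s \<noteq> 0"
    and "\<forall>\<^sub>F s in cofinite. of_real Q / y s - of_real (t * \<beta>) / x s \<noteq> 0"
proof -
  have kernel_swapped:
    "\<forall>\<^sub>F s in cofinite. kernel_form (of_real t) (of_real \<beta>) (of_real \<alpha>) \<delta> \<gamma> \<epsilon> (y s) (x s) = 0"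
    using kernel by eventually_elim (metis kernel_form_swap)
  show x_nz: "\<forall>\<^sub>F s in cofinite. x s \<noteq> 0"
    using kernel_param_eventually_nonzero[OF x_rat y_rat nonconstant _ kernel] nonzero(1,3) by simp
  show y_nz: "\<forall>\<^sub>F s in cofinite. y s \<noteq> 0"
    using kernel_param_eventually_nonzero[OF y_rat x_rat _ _ kernel_swapped] nonconstant nonzero(1,2)
    by auto
  show "\<forall>\<^sub>F s in cofinite. of_real P / x s - of_real (t * \<alpha>) / y s \<noteq> 0"
    using kernel_param_off_line[OF x_rat y_rat x_0 x_nz kernel transc coeffs(1,3,4) nonzero] x_nz y_nz
    by eventually_elim (simp add: field_simps)
  show "\<forall>\<^sub>F s in cofinite. of_real Q / y s - of_real (t * \<beta>) / x s \<noteq> 0"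
    using kernel_param_off_line[OF y_rat x_rat y_0 y_nz kernel_swapped transc coeffs(2,4,3) nonzero(1,3,2)] x_nz y_nz
    by eventually_elim (simp add: field_simps)
qed

lemma generically_injective_nonconstant:
  fixes x y :: "complex \<Rightarrow> complex"
  assumes "\<forall>\<^sub>F s in cofinite. \<forall>s'. isCont x s' \<and> isCont y s' \<and> x s' = x s \<and> y s' = y s \<longrightarrow> s' = s"
  shows "x \<noteq> (\<lambda>_. a) \<or> y \<noteq> (\<lambda>_. b)"
proof (rule ccontr)
  assume "\<not> ?thesis"
  then have "x = (\<lambda>_. a)" "y = (\<lambda>_. b)" by auto
  moreover obtain s where "\<forall>s'. isCont x s' \<and> isCont y s' \<and> x s' = x s \<and> y s' = y s \<longrightarrow> s' = s"
    using eventually_happens'[OF _ assms] by (auto simp: infinite_UNIV_char_0)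
  ultimately have "s + 1 = s" by simp
  then show False by simp
qed

lemma divide_invariant_imp_nonzero:
  fixes y :: "complex \<Rightarrow> complex" and q :: complex
  assumes "(y \<longlongrightarrow> 0) (at 0)" "\<forall>\<^sub>F s in cofinite. y s \<noteq> 0" "\<forall>\<^sub>F s in cofinite. y (q / s) = y s"
  shows "q \<noteq> 0"
proof
  assume "q = 0"
  have const: "\<forall>\<^sub>F s in cofinite. y s = y 0"
    using assms(3) by eventually_elim (metis \<open>q = 0\<close> div_0)
  then have "(y \<longlongrightarrow> y 0) (at 0)"
    by (intro tendsto_eventually eventually_cofinite_imp_at)
  then have "y 0 = 0"
    using tendsto_unique[OF _ _ assms(1)] by simp
  with const have "\<forall>\<^sub>F s in cofinite. y s = 0" by simp
  with assms(2) show False by (rule cofinite_contradiction[rotated])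
qed

lemma functional_equation_reflect:
  fixes \<gamma>1 \<gamma>2 F G :: "'a::field \<Rightarrow> 'a" and q \<omega> :: 'a
  assumes "q \<noteq> 0"
    and "\<forall>\<^sub>F s in cofinite. \<gamma>1 s * F s + \<gamma>2 s * G s + \<omega> = 0"
    and "\<forall>\<^sub>F s in cofinite. F (s / q) = \<gamma>1 s / \<gamma>2 s / (\<gamma>1 (q / s) / \<gamma>2 (q / s)) * F s
            + (\<omega> / \<gamma>2 s - \<omega> / \<gamma>2 (q / s)) / (\<gamma>1 (q / s) / \<gamma>2 (q / s))"
    and "\<forall>\<^sub>F s in cofinite. \<gamma>1 s \<noteq> 0" "\<forall>\<^sub>F s in cofinite. \<gamma>2 s \<noteq> 0"
  shows "\<forall>\<^sub>F s in cofinite. \<gamma>1 s * F (1 / s) + \<gamma>2 s * G (q / s) + \<omega> = 0"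
  using eventually_cofinite_divide[OF assms(1) assms(2)] eventually_cofinite_divide[OF assms(1) assms(3)]
    eventually_cofinite_divide[OF assms(1) assms(5)] assms(4,5)
proof eventually_elim
  case (elim s)
  define u where "u = q / s"
  have "q / u = s" "u / q = 1 / s" using assms(1) by (simp_all add: u_def)
  with elim have qdiff: "F (1 / s) = \<gamma>1 u / \<gamma>2 u / (\<gamma>1 s / \<gamma>2 s) * F u
      + (\<omega> / \<gamma>2 u - \<omega> / \<gamma>2 s) / (\<gamma>1 s / \<gamma>2 s)" and "\<gamma>2 u \<noteq> 0"
    by (simp_all add: u_def)
  have "\<gamma>1 s * F (1 / s) = \<gamma>2 s / \<gamma>2 u * (\<gamma>1 u * F u + \<omega>) - \<omega>"
    unfolding qdiff using elim \<open>\<gamma>2 u \<noteq> 0\<close> by (simp add: field_simps)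
  also have "\<gamma>1 u * F u + \<omega> = - (\<gamma>2 u * G u)"
    using elim by (simp add: u_def eq_neg_iff_add_eq_0 add.commute add.left_commute)
  finally show ?case using \<open>\<gamma>2 u \<noteq> 0\<close> by (simp add: u_def)
qed

lemma half_sum_and_half_difference_of_solutions:
  fixes g1 g2 F1 F2 G1 G2 w :: "'a::field_char_0"
  assumes "g1 * F1 + g2 * G1 + w = 0" "g1 * F2 + g2 * G2 + w = 0"
  shows "g1 * ((F1 + F2) / 2) + g2 * ((G1 + G2) / 2) + w = 0"
    and "g1 * ((F1 - F2) / 2) + g2 * ((G1 - G2) / 2) = 0"
proof -
  have "g1 * ((F1 + F2) / 2) + g2 * ((G1 + G2) / 2) + w
      = ((g1 * F1 + g2 * G1 + w) + (g1 * F2 + g2 * G2 + w)) / 2"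
    by (simp add: field_simps)
  then show "g1 * ((F1 + F2) / 2) + g2 * ((G1 + G2) / 2) + w = 0" using assms by simp
  have "g1 * ((F1 - F2) / 2) + g2 * ((G1 - G2) / 2)
      = ((g1 * F1 + g2 * G1 + w) - (g1 * F2 + g2 * G2 + w)) / 2"
    by (simp add: field_simps)
  then show "g1 * ((F1 - F2) / 2) + g2 * ((G1 - G2) / 2) = 0" using assms by simp
qed

theorem lemma2p2:
  fixes k :: nat and d :: "int \<times> int \<Rightarrow> real" and a b t q :: real
    and x y F G :: "complex \<Rightarrow> complex"
  defines "S \<equiv> stepset k"
  defines "A \<equiv> 1 - 1 / a" and "B \<equiv> 1 - 1 / b"
  defines "\<omega> \<equiv> complex_of_real (1 - A - B)"
  defines "\<gamma>1 \<equiv> (\<lambda>s. complex_of_real A / x s - complex_of_real (t * d (1,-1)) / y s)"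
  defines "\<gamma>2 \<equiv> (\<lambda>s. complex_of_real B / y s - complex_of_real (t * d (-1,1)) / x s)"
  defines "\<gamma> \<equiv> (\<lambda>s. \<gamma>1 s / \<gamma>2 s)"
  defines "f \<equiv> (\<lambda>s. (F s + F (1 / s)) / 2)"
  defines "g \<equiv> (\<lambda>s. (G s + G (complex_of_real q / s)) / 2)"
  defines "fh \<equiv> (\<lambda>s. (F s - F (1 / s)) / 2)"
  defines "gh \<equiv> (\<lambda>s. (G s - G (complex_of_real q / s)) / 2)"
  assumes k: "k \<in> {1..5}"
    and d_pos: "\<forall>v\<in>S. d v > 0"
    and a_pos: "a > 0" and b_pos: "b > 0"
    and t_pos: "t > 0"
    and t_transc: "transcendental_over (gen_field (d ` S \<union> {a, b})) t"
    and conv: "\<forall>X Y :: complex. norm X < 1 \<longrightarrow> norm Y < 1 \<longrightarrow>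
          (\<lambda>(n, i, j). norm (complex_of_real (wcount S d a b n (int i) (int j) * t ^ n)
                               * X ^ i * Y ^ j)) summable_on UNIV"
    and q_nonroot: "\<forall>n::nat. n > 0 \<longrightarrow> q ^ n \<noteq> 1"
    \<comment> \<open>the rational parametrization s \<mapsto> (x(s), y(s)) of the kernel curve\<close>
    and x_rat: "is_ratfun x" and y_rat: "is_ratfun y"
    and on_curve: "\<forall>\<^sub>F s in cofinite. kernel_poly S d t (x s) (y s) = 0"
    and onto_curve: "\<forall>X Y. kernel_poly S d t X Y = 0 \<longrightarrow>
          (\<exists>s. isCont x s \<and> isCont y s \<and> x s = X \<and> y s = Y)"
    and generic_inj: "\<forall>\<^sub>F s in cofinite. \<forall>s'. isCont x s' \<and> isCont y s' \<and>
          x s' = x s \<and> y s' = y s \<longrightarrow> s' = s"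
    and x_0: "(x \<longlongrightarrow> 0) (at 0)" and y_0: "(y \<longlongrightarrow> 0) (at 0)"
    and x_inf: "(x \<longlongrightarrow> 0) at_infinity" and y_inf: "(y \<longlongrightarrow> 0) at_infinity"
    and x_inv: "\<forall>\<^sub>F s in cofinite. x (1 / s) = x s"
    and y_inv: "\<forall>\<^sub>F s in cofinite. y (complex_of_real q / s) = y s"
    \<comment> \<open>F, G: continuations of x(s)Q(x(s),0), y(s)Q(0,y(s)), assumed rational\<close>
    and F_rat: "is_ratfun F" and G_rat: "is_ratfun G"
    and F_cont: "\<forall>\<^sub>F s in at 0. F s = x s * Qx0 S d a b t (x s)"
    and G_cont: "\<forall>\<^sub>F s in at 0. G s = y s * Q0y S d a b t (y s)"
    and FG_eq: "\<forall>\<^sub>F s in cofinite. \<gamma>1 s * F s + \<gamma>2 s * G s + \<omega> = 0"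
    and F_qdiff: "\<forall>\<^sub>F s in cofinite.
          F (s / complex_of_real q) = \<gamma> s / \<gamma> (complex_of_real q / s) * F s
            + (\<omega> / \<gamma>2 s - \<omega> / \<gamma>2 (complex_of_real q / s)) / \<gamma> (complex_of_real q / s)"
  shows "((\<forall>\<^sub>F s in cofinite. \<gamma>1 s * f s + \<gamma>2 s * g s + \<omega> = 0)
           \<and> (\<forall>\<^sub>F s in cofinite. f (1 / s) = f s)
           \<and> (\<forall>\<^sub>F s in cofinite. g (complex_of_real q / s) = g s))
       \<and> ((\<forall>\<^sub>F s in cofinite. \<gamma>1 s * fh s + \<gamma>2 s * gh s = 0)
           \<and> (\<forall>\<^sub>F s in cofinite. fh (1 / s) = - fh s)
           \<and> (\<forall>\<^sub>F s in cofinite. gh (complex_of_real q / s) = - gh s))"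
proof -
  let ?q = "complex_of_real q"
  have on_S: "(1,-1) \<in> S" "(-1,1) \<in> S"
    using k by (auto simp: S_def stepset_def)
  then have d_nonzero: "d (1,-1) \<noteq> 0" "d (-1,1) \<noteq> 0"
    using d_pos by force+
  let ?K = "gen_field (d ` S \<union> {a, b})"
  have in_K: "A \<in> ?K" "B \<in> ?K" "d (1,-1) \<in> ?K" "d (-1,1) \<in> ?K"
    using on_S by (auto simp: A_def B_def intro: gen_base gen_field_diff gen_field_divide gen_field_one)
  from on_curve obtain c01 c10 c11 where kernel: "\<forall>\<^sub>F s in cofinite.
      kernel_form (of_real t) (of_real (d (1,-1))) (of_real (d (-1,1))) c01 c10 c11 (x s) (y s) = 0"
    unfolding S_def kernel_poly_stepset[OF k] by blast
  have nonconstant: "x \<noteq> (\<lambda>_. 0) \<or> y \<noteq> (\<lambda>_. 0)"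
    by (rule generically_injective_nonconstant[OF generic_inj])
  note nondegenerate = kernel_param_nondegenerate[OF x_rat y_rat x_0 y_0 nonconstant kernel t_transc in_K]
  have \<gamma>1_nz: "\<forall>\<^sub>F s in cofinite. \<gamma>1 s \<noteq> 0" and \<gamma>2_nz: "\<forall>\<^sub>F s in cofinite. \<gamma>2 s \<noteq> 0"
    unfolding \<gamma>1_def \<gamma>2_def using nondegenerate(3,4) t_pos d_nonzero by simp_all
  have q_nz: "?q \<noteq> 0"
    using divide_invariant_imp_nonzero[OF y_0 nondegenerate(2) y_inv] t_pos d_nonzero by simp
  have reflected: "\<forall>\<^sub>F s in cofinite. \<gamma>1 s * F (1 / s) + \<gamma>2 s * G (?q / s) + \<omega> = 0"
    by (rule functional_equation_reflect[OF q_nz FG_eq F_qdiff[unfolded \<gamma>_def] \<gamma>1_nz \<gamma>2_nz])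
  have "\<forall>\<^sub>F s in cofinite. \<gamma>1 s * f s + \<gamma>2 s * g s + \<omega> = 0 \<and> \<gamma>1 s * fh s + \<gamma>2 s * gh s = 0"
    using FG_eq reflected
    by eventually_elim (simp only: f_def g_def fh_def gh_def half_sum_and_half_difference_of_solutions)
  moreover have "f (1 / s) = f s" "g (?q / s) = g s" "fh (1 / s) = - fh s" "gh (?q / s) = - gh s" for s
    using q_nz by (simp_all add: f_def g_def fh_def gh_def add.commute minus_divide_left)
  ultimately show ?thesis by (auto elim: eventually_mono)
qed

end
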